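(* For every prime $p\geq 11$, $$P(p,3)\leq (p-1)!-\left\lceil \tfrac{p}{3}\right\rceil+2\leq (p-1)!-2 .$$
   Context: $S_n$ denotes the set (group) of all permutations of $[n]=\{1,\dots,n\}$, with product $\lambda\cdot\sigma$ defined by $(\lambda\cdot\sigma)(i)=\sigma(\lambda(i))$. An adjacent transposition is a transposition $(i,i+1)$ with $1\leq i\leq n-1$. The Kendall $\tau$-distance $d_K(\rho,\pi)$ between $\rho,\pi\in S_n$ is the minimum number of adjacent transpositions whose product equals $\rho\pi^{-1}$ (equivalently, the graph distance in the Cayley graph of $S_n$ with respect to the set of adjacent transpositions). A permutation code of length $n$ is a non-empty subset of $S_n$; $P(n,d)$ denotes the maximum size of a permutation code $C\subseteq S_n$ such that $d_K(x,y)\geq d$ for all distinct $x,y\in C$. *)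

theory Defs
  imports "HOL-Combinatorics.Combinatorics" "HOL-Computational_Algebra.Primes"
begin

text \<open>Permutations of [n] = {1..n} are functions nat => nat with p permutes {1..n}.
  Product convention of the paper: (lambda . sigma)(i) = sigma(lambda(i)), i.e.
  lambda . sigma = sigma o lambda.\<close>

definition perm_mult :: "(nat \<Rightarrow> nat) \<Rightarrow> (nat \<Rightarrow> nat) \<Rightarrow> (nat \<Rightarrow> nat)" where
  "perm_mult l s = s \<circ> l"

definition adj_transp :: "nat \<Rightarrow> (nat \<Rightarrow> nat)" where
  "adj_transp i = Transposition.transpose i (Suc i)"

definition adj_prod :: "nat list \<Rightarrow> (nat \<Rightarrow> nat)" where
  "adj_prod is = foldl (\<lambda>acc i. perm_mult acc (adj_transp i)) id is"

definition kendall_dist :: "nat \<Rightarrow> (nat \<Rightarrow> nat) \<Rightarrow> (nat \<Rightarrow> nat) \<Rightarrow> nat" where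
  "kendall_dist n rho sig = (LEAST k. \<exists>is. length is = k \<and> set is \<subseteq> {1..<n} \<and>
      adj_prod is = perm_mult rho (inv sig))"

definition Sn :: "nat \<Rightarrow> (nat \<Rightarrow> nat) set" where
  "Sn n = {p. p permutes {1..n}}"

definition perm_code_dist :: "nat \<Rightarrow> nat \<Rightarrow> (nat \<Rightarrow> nat) set \<Rightarrow> bool" where
  "perm_code_dist n d C \<longleftrightarrow> C \<noteq> {} \<and> C \<subseteq> Sn n \<and>
     (\<forall>x\<in>C. \<forall>y\<in>C. x \<noteq> y \<longrightarrow> kendall_dist n x y \<ge> d)"

definition P_code :: "nat \<Rightarrow> nat \<Rightarrow> nat" where
  "P_code n d = Max (card ` {C. perm_code_dist n d C})"

end

theory Submission
  imports Defs "HOL-Number_Theory.Residues"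
begin

(* Let C be a code in S_n with minimum Kendall distance 3 and let c_k count the codewords
   sending position k to the value n.  Balls of radius one around distinct codewords are
   disjoint, and the ball around a codeword s sends k to n exactly through the elements
   s o t_i with s (t_i k) = n (t_0 = id, t_i = (i, i+1)).  Hence
   sum_{i<n} c_{t_i k} <= (n-1)! for every k.  For prime n, Wilson's theorem writes
   (n-1)! + 1 = n A, so the integer weights w_k = A - c_k have every neighbourhood sum
   sum_{i<n} w_{t_i k} >= 1.  A local estimate with positive and negative parts shows that
   such weights have total at least n/3; as the total is n A - |C|, this gives
   |C| <= (n-1)! + 1 - ceil(n/3). *)

text \<open>Index 0 stands for the identity, so \<open>\<sigma> \<circ> adj_swap i\<close> with \<open>i < n\<close> runs
  through the Kendall ball of radius one around \<open>\<sigma>\<close>.\<close>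

definition adj_swap :: "nat \<Rightarrow> nat \<Rightarrow> nat" where
  "adj_swap i = (if i = 0 then id else Transposition.transpose i (Suc i))"

lemma adj_swap_idem [simp]: "adj_swap i \<circ> adj_swap i = id"
  by (simp add: adj_swap_def)

lemma inj_adj_swap: "inj adj_swap"
proof (rule injI)
  fix i j assume "adj_swap i = adj_swap j"
  then have "adj_swap i i = adj_swap j i" "adj_swap i j = adj_swap j j" by auto
  then show "i = j" by (auto simp: adj_swap_def transpose_def split: if_splits)
qed

lemma adj_swap_permutes: "i < n \<Longrightarrow> adj_swap i permutes {1..n}"
  by (auto simp: adj_swap_def intro!: permutes_swap_id)

lemma adj_prod_adj_swaps: "adj_prod (filter (\<lambda>i. i \<noteq> 0) [i, j]) = adj_swap j \<circ> adj_swap i"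
  by (auto simp: adj_prod_def perm_mult_def adj_transp_def adj_swap_def)

lemma kendall_dist_le_length:
  assumes "set ts \<subseteq> {1..<n}" "adj_prod ts = perm_mult \<rho> (Hilbert_Choice.inv \<sigma>)"
  shows "kendall_dist n \<rho> \<sigma> \<le> length ts"
  unfolding kendall_dist_def by (rule Least_le) (use assms in blast)

lemma kendall_dist_adj_swaps_le:
  assumes "\<tau> permutes {1..n}" "i < n" "j < n" "\<sigma> \<circ> adj_swap i = \<tau> \<circ> adj_swap j"
  shows "kendall_dist n \<sigma> \<tau> \<le> 2"
proof -
  define ts where "ts = filter (\<lambda>i. i \<noteq> 0) [i, j]"
  have "\<sigma> = \<tau> \<circ> adj_swap j \<circ> adj_swap i"
    by (metis assms(4) adj_swap_idem comp_assoc comp_id)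
  then have "perm_mult \<sigma> (Hilbert_Choice.inv \<tau>) = adj_swap j \<circ> adj_swap i"
    using permutes_inv_o(2)[OF assms(1)] by (simp add: perm_mult_def flip: comp_assoc)
  also have "\<dots> = adj_prod ts"
    unfolding ts_def by (rule adj_prod_adj_swaps[symmetric])
  finally have "perm_mult \<sigma> (Hilbert_Choice.inv \<tau>) = adj_prod ts" .
  moreover have "set ts \<subseteq> {1..<n}" "length ts \<le> 2"
    using assms(2,3) by (auto simp: ts_def)
  ultimately show ?thesis
    using kendall_dist_le_length[of ts n \<sigma> \<tau>] by simp
qed

lemma inj_on_code_adj_swaps:
  assumes "perm_code_dist n d C" "3 \<le> d"
  shows "inj_on (\<lambda>(i, \<sigma>). \<sigma> \<circ> adj_swap i) ({..<n} \<times> C)"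
proof -
  have "i = j \<and> \<sigma> = \<tau>"
    if ij: "i < n" "j < n" and C: "\<sigma> \<in> C" "\<tau> \<in> C" and eq: "\<sigma> \<circ> adj_swap i = \<tau> \<circ> adj_swap j"
    for i j \<sigma> \<tau>
  proof -
    have perm: "\<sigma> permutes {1..n}" "\<tau> permutes {1..n}"
      using assms(1) C by (auto simp: perm_code_dist_def Sn_def)
    have "\<sigma> = \<tau>"
    proof (rule ccontr)
      assume "\<sigma> \<noteq> \<tau>"
      then have "3 \<le> kendall_dist n \<sigma> \<tau>"
        using assms C unfolding perm_code_dist_def by force
      with kendall_dist_adj_swaps_le[OF perm(2) ij eq] show False by simp
    qed
    moreover have "adj_swap i = adj_swap j"
      using eq \<open>\<sigma> = \<tau>\<close> permutes_inj[OF perm(1)] by (metis fun.inj_map_strong inj_eq)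
    ultimately show ?thesis
      using inj_adj_swap by (auto dest: injD)
  qed
  then show ?thesis
    by (auto intro!: inj_onI)
qed

lemma card_permutes_with_value_le:
  assumes "finite S" "a \<in> S" "b \<in> S"
  shows "card {\<pi>. \<pi> permutes S \<and> \<pi> a = b} \<le> fact (card S - 1)"
proof -
  define \<tau> where "\<tau> = Transposition.transpose a b"
  have "inj_on (\<lambda>\<pi>. \<pi> \<circ> \<tau>) {\<pi>. \<pi> permutes S \<and> \<pi> a = b}"
    by (rule inj_onI) (metis \<tau>_def comp_assoc comp_id transpose_comp_involutory)
  moreover have "\<pi> \<circ> \<tau> permutes S - {b}" if "\<pi> permutes S" "\<pi> a = b" for \<pi>
  proof (rule permutes_superset)
    show "\<pi> \<circ> \<tau> permutes S"
      using that(1) assms(2,3) by (simp add: \<tau>_def permutes_compose permutes_swap_id)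
  qed (simp add: \<tau>_def that(2))
  moreover have "card {\<pi>. \<pi> permutes S - {b}} = fact (card S - 1)"
    using assms by (simp add: card_permutations)
  ultimately show ?thesis
    using card_inj_on_le[of "\<lambda>\<pi>. \<pi> \<circ> \<tau>" _ "{\<pi>. \<pi> permutes S - {b}}"] assms(1)
    by (force simp: finite_permutations)
qed

lemma card_eq_sum_value_fibres:
  assumes "finite S" "b \<in> S" "\<And>\<sigma>. \<sigma> \<in> C \<Longrightarrow> \<sigma> permutes S"
  shows "card C = (\<Sum>k\<in>S. card {\<sigma>\<in>C. \<sigma> k = b})"
proof -
  have fin: "finite C"
    using assms finite_subset[OF _ finite_permutations[OF assms(1)]] by blast
  have "(\<lambda>\<sigma>. Hilbert_Choice.inv \<sigma> b) ` C \<subseteq> S"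
    using assms(2,3) by (auto simp: permutes_in_image permutes_inv)
  then have "card C = (\<Sum>k\<in>S. card {\<sigma>\<in>C. Hilbert_Choice.inv \<sigma> b = k})"
    using sum.group[of C S "\<lambda>\<sigma>. Hilbert_Choice.inv \<sigma> b" "\<lambda>_. 1::nat"] fin assms(1) by simp
  also have "\<dots> = (\<Sum>k\<in>S. card {\<sigma>\<in>C. \<sigma> k = b})"
    using assms(3) by (intro sum.cong refl arg_cong[where f = card]) (blast dest: permutes_inv_eq)
  finally show ?thesis .
qed

lemma sum_adj_swap_first:
  fixes w :: "nat \<Rightarrow> int"
  assumes "1 < n"
  shows "(\<Sum>i<n. w (adj_swap i 1)) = (int n - 1) * w 1 + w 2"
proof -
  have "(\<Sum>i<n. w (adj_swap i 1)) = w (adj_swap 1 1) + (\<Sum>i\<in>{..<n} - {1}. w (adj_swap i 1))"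
    using assms by (simp add: sum.remove)
  also have "(\<Sum>i\<in>{..<n} - {1}. w (adj_swap i 1)) = (\<Sum>i\<in>{..<n} - {1}. w 1)"
    by (rule sum.cong) (auto simp: adj_swap_def transpose_def)
  finally show ?thesis
    using assms by (simp add: adj_swap_def of_nat_diff numeral_2_eq_2)
qed

lemma sum_adj_swap_last:
  fixes w :: "nat \<Rightarrow> int"
  assumes "1 < n"
  shows "(\<Sum>i<n. w (adj_swap i n)) = (int n - 1) * w n + w (n - 1)"
proof -
  have "(\<Sum>i<n. w (adj_swap i n)) = w (adj_swap (n - 1) n) + (\<Sum>i\<in>{..<n} - {n - 1}. w (adj_swap i n))"
    using assms by (simp add: sum.remove[of "{..<n}" "n - 1"])
  also have "(\<Sum>i\<in>{..<n} - {n - 1}. w (adj_swap i n)) = (\<Sum>i\<in>{..<n} - {n - 1}. w n)"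
    by (rule sum.cong) (auto simp: adj_swap_def transpose_def)
  finally show ?thesis
    using assms by (simp add: adj_swap_def of_nat_diff)
qed

lemma sum_adj_swap_interior:
  fixes w :: "nat \<Rightarrow> int"
  assumes "1 < k" "k < n"
  shows "(\<Sum>i<n. w (adj_swap i k)) = (int n - 2) * w k + w (k - 1) + w (k + 1)"
proof -
  have mem: "k \<in> {..<n}" "k - 1 \<in> {..<n} - {k}"
    using assms by auto
  have "(\<Sum>i<n. w (adj_swap i k))
      = w (adj_swap k k) + w (adj_swap (k - 1) k) + (\<Sum>i\<in>{..<n} - {k} - {k - 1}. w (adj_swap i k))"
    using sum.remove[OF _ mem(1), of "\<lambda>i. w (adj_swap i k)"]
      sum.remove[OF _ mem(2), of "\<lambda>i. w (adj_swap i k)"] by simp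
  also have "(\<Sum>i\<in>{..<n} - {k} - {k - 1}. w (adj_swap i k)) = (\<Sum>i\<in>{..<n} - {k} - {k - 1}. w k)"
    by (rule sum.cong) (auto simp: adj_swap_def transpose_def)
  finally show ?thesis
    using assms mem by (simp add: adj_swap_def of_nat_diff)
qed

lemma adj_swap_sum_pos_imp_local_bound:
  fixes w :: "nat \<Rightarrow> int"
  assumes "1 < n" "k \<in> {1..n}" "w 0 = 0" "w (Suc n) = 0" "1 \<le> (\<Sum>i<n. w (adj_swap i k))"
  shows "1 + (int n - 2) * max (- w k) 0 \<le> max (w (k - 1)) 0 + max (w k) 0 + max (w (k + 1)) 0"
proof (cases "w k \<le> 0")
  case True
  have shift: "(int n - 1) * w k = (int n - 2) * w k + w k"
    by (simp add: algebra_simps)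
  have "(\<Sum>i<n. w (adj_swap i k)) \<le> (int n - 2) * w k + max (w (k - 1)) 0 + max (w (k + 1)) 0"
  proof -
    consider "k = 1" | "k = n" | "1 < k" "k < n"
      using assms(2) by fastforce
    then show ?thesis
    proof cases
      case 1
      then show ?thesis
        using sum_adj_swap_first[OF assms(1)] shift True by (simp add: numeral_2_eq_2)
    next
      case 2
      then show ?thesis
        using sum_adj_swap_last[OF assms(1)] shift True by simp
    next
      case 3
      then show ?thesis
        using sum_adj_swap_interior[of k n w] by simp
    qed
  qed
  with True assms(5) show ?thesis
    by simp
qed simp

lemma sum_shift_down:
  fixes Q :: "nat \<Rightarrow> int"
  shows "(\<Sum>k=1..n. Q (k - 1)) + Q n = (\<Sum>k=1..n. Q k) + Q 0"
  by (induction n) auto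

lemma sum_shift_up:
  fixes Q :: "nat \<Rightarrow> int"
  shows "(\<Sum>k=1..n. Q (k + 1)) + Q 1 = (\<Sum>k=1..n. Q k) + Q (n + 1)"
  by (induction n) auto

lemma adj_swap_sums_pos_imp_three_sum_ge:
  fixes w :: "nat \<Rightarrow> int"
  assumes "5 \<le> n" "\<And>k. k \<in> {1..n} \<Longrightarrow> 1 \<le> (\<Sum>i<n. w (adj_swap i k))"
  shows "int n \<le> 3 * (\<Sum>k=1..n. w k)"
proof -
  define W where "W j = (if j \<in> {1..n} then w j else 0)" for j
  define Q where "Q j = max (W j) 0" for j
  define R where "R j = max (- W j) 0" for j
  have "(\<Sum>i<n. W (adj_swap i k)) = (\<Sum>i<n. w (adj_swap i k))" if "k \<in> {1..n}" for k
  proof (rule sum.cong)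
    fix i assume "i \<in> {..<n}"
    then have "adj_swap i k \<in> {1..n}"
      using permutes_in_image[OF adj_swap_permutes] that by blast
    then show "W (adj_swap i k) = w (adj_swap i k)"
      by (simp add: W_def)
  qed simp
  then have local: "1 + (int n - 2) * R k \<le> Q (k - 1) + Q k + Q (k + 1)" if "k \<in> {1..n}" for k
    using adj_swap_sum_pos_imp_local_bound[of n k W] assms that by (simp add: Q_def R_def W_def)
  txt \<open>Summing the local bounds counts each positive part at most three times and each
    negative part \<open>n - 2 \<ge> 3\<close> times.\<close>
  have "(\<Sum>k=1..n. 1 + (int n - 2) * R k) \<le> (\<Sum>k=1..n. Q (k - 1) + Q k + Q (k + 1))"
    by (rule sum_mono) (use local in auto)
  also have "\<dots> = (\<Sum>k=1..n. Q (k - 1)) + (\<Sum>k=1..n. Q k) + (\<Sum>k=1..n. Q (k + 1))"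
    by (simp add: sum.distrib)
  also have "\<dots> \<le> 3 * (\<Sum>k=1..n. Q k)"
  proof -
    have "Q 0 = 0" "Q (n + 1) = 0" "0 \<le> Q n" "0 \<le> Q 1"
      by (auto simp: Q_def W_def)
    then show ?thesis
      using sum_shift_down[of Q n] sum_shift_up[of Q n] by linarith
  qed
  finally have "int n + (int n - 2) * (\<Sum>k=1..n. R k) \<le> 3 * (\<Sum>k=1..n. Q k)"
    by (simp add: sum.distrib sum_distrib_left)
  moreover have "0 \<le> (\<Sum>k=1..n. R k)"
    by (rule sum_nonneg) (simp add: R_def)
  moreover have "(\<Sum>k=1..n. w k) = (\<Sum>k=1..n. Q k) - (\<Sum>k=1..n. R k)"
    unfolding sum_subtractf[symmetric] by (rule sum.cong) (auto simp: Q_def R_def W_def)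
  ultimately show ?thesis
    using assms(1) mult_right_mono[of 3 "int n - 2" "\<Sum>k=1..n. R k"] by linarith
qed

lemma code_adj_swap_count_le:
  assumes "perm_code_dist n d C" "3 \<le> d" "k \<in> {1..n}" "b \<in> {1..n}"
  shows "(\<Sum>i<n. card {\<sigma>\<in>C. \<sigma> (adj_swap i k) = b}) \<le> fact (n - 1)"
proof -
  define D where "D = (SIGMA i:{..<n}. {\<sigma>\<in>C. \<sigma> (adj_swap i k) = b})"
  have perm: "\<sigma> permutes {1..n}" if "\<sigma> \<in> C" for \<sigma>
    using assms(1) that by (auto simp: perm_code_dist_def Sn_def)
  then have "finite C"
    using finite_subset[OF _ finite_permutations[of "{1..n}"]] by blast
  then have "(\<Sum>i<n. card {\<sigma>\<in>C. \<sigma> (adj_swap i k) = b}) = card D"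
    by (simp add: D_def card_SigmaI)
  also have "\<dots> \<le> card {\<pi>. \<pi> permutes {1..n} \<and> \<pi> k = b}"
  proof (rule card_inj_on_le)
    show "inj_on (\<lambda>(i, \<sigma>). \<sigma> \<circ> adj_swap i) D"
      by (rule inj_on_subset[OF inj_on_code_adj_swaps[OF assms(1,2)]]) (auto simp: D_def)
    have "\<sigma> \<circ> adj_swap i permutes {1..n}" if "i < n" "\<sigma> \<in> C" for i \<sigma>
      using permutes_compose[OF adj_swap_permutes perm] that .
    then show "(\<lambda>(i, \<sigma>). \<sigma> \<circ> adj_swap i) ` D \<subseteq> {\<pi>. \<pi> permutes {1..n} \<and> \<pi> k = b}"
      by (force simp: D_def)
    show "finite {\<pi>. \<pi> permutes {1..n} \<and> \<pi> k = b}"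
      by (simp add: finite_permutations)
  qed
  also have "\<dots> \<le> fact (n - 1)"
    using card_permutes_with_value_le[of "{1..n}" k b] assms(3,4) by simp
  finally show ?thesis .
qed

lemma card_perm_code_prime_le:
  assumes "prime n" "5 \<le> n" "perm_code_dist n d C" "3 \<le> d"
  shows "int (card C) + \<lceil>real n / 3\<rceil> \<le> int (fact (n - 1)) + 1"
proof -
  define c where "c k = card {\<sigma>\<in>C. \<sigma> k = n}" for k
  have "int n dvd int (fact (n - 1)) + 1"
    using wilson_theorem[OF assms(1)] by (simp add: cong_iff_dvd_diff of_nat_fact)
  then obtain A where A: "int (fact (n - 1)) + 1 = int n * A"
    by (auto simp: dvd_def)
  define w where "w k = A - int (c k)" for k
  define m where "m = int (fact (n - 1)) + 1 - int (card C)"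
  have "1 \<le> (\<Sum>i<n. w (adj_swap i k))" if "k \<in> {1..n}" for k
  proof -
    have "(\<Sum>i<n. c (adj_swap i k)) \<le> fact (n - 1)"
      unfolding c_def using code_adj_swap_count_le[OF assms(3,4) that, of n] assms(2) by simp
    then have "int (\<Sum>i<n. c (adj_swap i k)) \<le> int (fact (n - 1))"
      by (simp only: of_nat_le_iff)
    then show ?thesis
      using A by (simp add: w_def sum_subtractf)
  qed
  then have "int n \<le> 3 * (\<Sum>k=1..n. w k)"
    by (rule adj_swap_sums_pos_imp_three_sum_ge[OF assms(2)])
  moreover have "card C = (\<Sum>k=1..n. c k)"
    unfolding c_def using assms(2,3)
    by (intro card_eq_sum_value_fibres) (auto simp: perm_code_dist_def Sn_def)
  then have "(\<Sum>k=1..n. w k) = int n * A - int (card C)"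
    by (simp add: w_def sum_subtractf)
  ultimately have "int n \<le> 3 * m"
    unfolding m_def A by simp
  then have "\<lceil>real n / 3\<rceil> \<le> m"
    by (simp add: ceiling_le_iff)
  then show ?thesis
    unfolding m_def by linarith
qed

lemma P_code_attained: "\<exists>C. perm_code_dist n d C \<and> card C = P_code n d"
proof -
  have "finite (Sn n)"
    by (simp add: Sn_def finite_permutations)
  moreover have "{C. perm_code_dist n d C} \<subseteq> Pow (Sn n)"
    by (auto simp: perm_code_dist_def)
  ultimately have "finite (card ` {C. perm_code_dist n d C})"
    by (meson finite_Pow_iff finite_imageI finite_subset)
  moreover have "perm_code_dist n d {id}"
    by (simp add: perm_code_dist_def Sn_def permutes_id)
  ultimately have "P_code n d \<in> card ` {C. perm_code_dist n d C}"
    unfolding P_code_def by (intro Max_in) auto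
  then show ?thesis
    by auto
qed

theorem theorem1p1:
  fixes p :: nat
  assumes "prime p" and "p \<ge> 11"
  shows "int (P_code p 3) \<le> int (fact (p - 1)) - \<lceil>real p / 3\<rceil> + 2
       \<and> int (fact (p - 1)) - \<lceil>real p / 3\<rceil> + 2 \<le> int (fact (p - 1)) - 2"
proof
  obtain C where "perm_code_dist p 3 C" "card C = P_code p 3"
    using P_code_attained by blast
  then show "int (P_code p 3) \<le> int (fact (p - 1)) - \<lceil>real p / 3\<rceil> + 2"
    using card_perm_code_prime_le[of p 3 C] assms by simp
  have "4 \<le> \<lceil>real p / 3\<rceil>"
    using assms(2) by (simp add: le_ceiling_iff)
  then show "int (fact (p - 1)) - \<lceil>real p / 3\<rceil> + 2 \<le> int (fact (p - 1)) - 2"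
    by simp
qed

end
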